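(* Let $u\in\dot W^{1,1}(\mathbb R)$ be compactly supported. Then $\nu_{-1}(E_{\lambda,-1}[u])<\infty$ for all $\lambda>0$.
   Context: Here $N=1$: $\nu_{-1}(E)=\iint_{(x,y)\in E,\,x\ne y}|x-y|^{-2}\,dx\,dy$ for measurable $E\subset\mathbb R^2$, and $E_{\lambda,-1}[u]=\{(x,y):x\ne y,\ |u(x)-u(y)|>\lambda\}$. $\dot W^{1,1}(\mathbb R)$: locally integrable functions whose distributional derivative is in $L^1(\mathbb R)$. *)

theory Defs
  imports "HOL-Analysis.Analysis"
begin

definition test_function :: "(real \<Rightarrow> real) \<Rightarrow> bool" where
  "test_function \<phi> \<longleftrightarrow>
     (\<forall>n x. ((deriv ^^ n) \<phi>) differentiable (at x)) \<and> bounded {x. \<phi> x \<noteq> 0}"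

definition locally_integrable :: "(real \<Rightarrow> real) \<Rightarrow> bool" where
  "locally_integrable u \<longleftrightarrow> (\<forall>K. compact K \<longrightarrow> set_integrable lborel K u)"

definition dot_W11 :: "(real \<Rightarrow> real) set" where
  "dot_W11 = {u. locally_integrable u \<and>
     (\<exists>g. integrable lborel g \<and>
        (\<forall>\<phi>. test_function \<phi> \<longrightarrow>
            (\<integral>x. u x * deriv \<phi> x \<partial>lborel) = - (\<integral>x. g x * \<phi> x \<partial>lborel)))}"

definition nu_m1 :: "(real \<times> real) set \<Rightarrow> ennreal" where
  "nu_m1 E = (\<integral>\<^sup>+ p. indicator E p *
       (if fst p \<noteq> snd p then ennreal (1 / \<bar>fst p - snd p\<bar> ^ 2) else 0)
     \<partial>(lborel \<Otimes>\<^sub>M lborel))"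

definition E_lam :: "real \<Rightarrow> (real \<Rightarrow> real) \<Rightarrow> (real \<times> real) set" where
  "E_lam lam u = {(x, y). x \<noteq> y \<and> \<bar>u x - u y\<bar> > lam}"

end

theory Submission
  imports Defs "HOL-Computational_Algebra.Polynomial"
begin

text \<open>By the du Bois-Reymond argument, testing the weak derivative \<open>g\<close> against smoothed
  indicators of intervals shows that \<open>u\<close> agrees almost everywhere with the continuous primitive
  \<open>G b = \<integral>\<^sub>a\<^sup>b g\<close>, where \<open>a\<close> lies left of the support of \<open>u\<close>. \<open>G\<close> is uniformly continuous on a
  neighbourhood of the support, so there is a \<open>\<delta> > 0\<close> such that, up to a null set,
  \<open>E\<^sub>\<lambda>[u]\<close> only contains pairs with \<open>\<delta> \<le> \<bar>x - y\<bar>\<close> and \<open>x\<close> or \<open>y\<close> in the support.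
  These two strips have finite \<open>\<nu>\<^sub>-\<^sub>1\<close>-measure, since \<open>\<integral>\<^bsub>\<bar>z\<bar>\<ge>\<delta>\<^esub> z\<^sup>-\<^sup>2 dz = 2/\<delta>\<close>.\<close>

subsection \<open>Iterated differentiability\<close>

fun differentiable_upto :: "nat \<Rightarrow> (real \<Rightarrow> real) \<Rightarrow> bool" where
  "differentiable_upto 0 f \<longleftrightarrow> (\<forall>x. f differentiable at x)"
| "differentiable_upto (Suc n) f \<longleftrightarrow> (\<forall>x. f differentiable at x) \<and> differentiable_upto n (deriv f)"

lemma differentiable_upto_iff:
  "differentiable_upto n f \<longleftrightarrow> (\<forall>k\<le>n. \<forall>x. (deriv ^^ k) f differentiable at x)"
proof (induction n arbitrary: f)
  case (Suc n)
  have "(\<forall>k\<le>Suc n. \<forall>x. (deriv ^^ k) f differentiable at x) \<longleftrightarrow>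
        (\<forall>x. f differentiable at x) \<and> (\<forall>k\<le>n. \<forall>x. (deriv ^^ k) (deriv f) differentiable at x)"
    (is "?L = ?R")
  proof
    assume ?L then show ?R
      by (metis Suc_le_mono comp_apply funpow_0 funpow_Suc_right zero_le)
  next
    assume ?R then show ?L
      by (intro allI impI, case_tac k) (auto simp: funpow_Suc_right simp del: funpow.simps)
  qed
  then show ?case using Suc by simp
qed simp

lemma differentiable_upto_has_real_derivative:
  "differentiable_upto n f \<Longrightarrow> (f has_real_derivative deriv f x) (at x)"
  by (cases n) (auto simp: DERIV_deriv_iff_real_differentiable)

lemma differentiable_upto_SucD: "differentiable_upto (Suc n) f \<Longrightarrow> differentiable_upto n f"
  by (auto simp: differentiable_upto_iff)

lemma differentiable_upto_add:
  "differentiable_upto n f \<Longrightarrow> differentiable_upto n g \<Longrightarrow> differentiable_upto n (\<lambda>x. f x + g x)"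
proof (induction n arbitrary: f g)
  case (Suc n)
  have "deriv (\<lambda>x. f x + g x) = (\<lambda>x. deriv f x + deriv g x)"
    using Suc.prems differentiable_upto_has_real_derivative
    by (intro ext DERIV_imp_deriv DERIV_add) blast+
  then show ?case using Suc by auto
qed auto

lemma differentiable_upto_const: "differentiable_upto n (\<lambda>x. c)"
proof (induction n arbitrary: c)
  case (Suc n)
  have "deriv (\<lambda>x. c) = (\<lambda>x. 0)" by auto
  then show ?case using Suc by auto
qed auto

lemma differentiable_upto_ident: "differentiable_upto n (\<lambda>x. x)"
  by (cases n) (auto simp: differentiable_upto_const)

lemma differentiable_upto_mult:
  "differentiable_upto n f \<Longrightarrow> differentiable_upto n g \<Longrightarrow> differentiable_upto n (\<lambda>x. f x * g x)"
proof (induction n arbitrary: f g)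
  case (Suc n)
  have "deriv (\<lambda>x. f x * g x) = (\<lambda>x. f x * deriv g x + deriv f x * g x)"
    using Suc.prems differentiable_upto_has_real_derivative
    by (intro ext DERIV_imp_deriv DERIV_mult') blast+
  moreover have "differentiable_upto n (\<lambda>x. f x * deriv g x + deriv f x * g x)"
    using Suc.IH Suc.prems differentiable_upto_SucD by (intro differentiable_upto_add) auto
  ultimately show ?case using Suc.prems by auto
qed auto

lemma differentiable_upto_minus: "differentiable_upto n f \<Longrightarrow> differentiable_upto n (\<lambda>x. - f x)"
  using differentiable_upto_mult[OF differentiable_upto_const[of n "-1"]] by simp

lemma differentiable_upto_diff:
  "differentiable_upto n f \<Longrightarrow> differentiable_upto n g \<Longrightarrow> differentiable_upto n (\<lambda>x. f x - g x)"
  using differentiable_upto_add[OF _ differentiable_upto_minus] by simp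

lemma differentiable_upto_compose:
  "differentiable_upto n f \<Longrightarrow> differentiable_upto n h \<Longrightarrow> differentiable_upto n (\<lambda>x. f (h x))"
proof (induction n arbitrary: f h)
  case 0 then show ?case
    using differentiable_chain_at[of h _ f] by (auto simp: o_def)
next
  case (Suc n)
  have "deriv (\<lambda>x. f (h x)) = (\<lambda>x. deriv f (h x) * deriv h x)"
    using Suc.prems differentiable_upto_has_real_derivative
    by (intro ext DERIV_imp_deriv DERIV_chain2) blast+
  moreover have "differentiable_upto n (\<lambda>x. deriv f (h x) * deriv h x)"
    using Suc.IH Suc.prems differentiable_upto_SucD by (intro differentiable_upto_mult) auto
  ultimately show ?case
    using Suc.prems differentiable_chain_at[of h _ f] by (auto simp: o_def)
qed

lemma differentiable_upto_inverse:
  assumes "\<And>x. h x \<noteq> 0" and "differentiable_upto n h"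
  shows "differentiable_upto n (\<lambda>x. inverse (h x))"
proof -
  have d: "((\<lambda>x. inverse (f x)) has_real_derivative - (deriv f x * (inverse (f x) * inverse (f x)))) (at x)"
    if "f x \<noteq> 0" "differentiable_upto m f" for f m x
    using DERIV_inverse_fun[of f "deriv f x" x UNIV] that differentiable_upto_has_real_derivative[OF that(2)]
    by (auto simp: power2_eq_square[symmetric] power_inverse)
  from assms show ?thesis
  proof (induction n arbitrary: h)
    case 0
    have "(\<lambda>x. inverse (h x)) differentiable at x" for x
      using d[OF 0] real_differentiable_def by blast
    then show ?case by simp
  next
    case (Suc n)
    have dh: "((\<lambda>x. inverse (h x)) has_real_derivative
        - (deriv h x * (inverse (h x) * inverse (h x)))) (at x)" for x
      by (rule d[OF Suc.prems])
    then have "deriv (\<lambda>x. inverse (h x)) = (\<lambda>x. - (deriv h x * (inverse (h x) * inverse (h x))))"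
      by (intro ext DERIV_imp_deriv)
    moreover have "differentiable_upto n (\<lambda>x. - (deriv h x * (inverse (h x) * inverse (h x))))"
      using Suc.IH[OF Suc.prems(1)] Suc.prems differentiable_upto_SucD
      by (intro differentiable_upto_minus differentiable_upto_mult) auto
    ultimately show ?case using dh by (auto simp: real_differentiable_def)
  qed
qed

subsection \<open>A smooth step function\<close>

text \<open>For \<open>x > 0\<close>, the derivative of \<open>P(1/x) exp(-1/x)\<close> is \<open>x\<^sup>-\<^sup>2 (P - P')(1/x) exp(-1/x)\<close>, which
  gives \<open>flat_deriv_poly\<close>; all these functions tend to \<open>0\<close> at \<open>0\<close>, so they glue smoothly to \<open>0\<close>
  on \<open>x \<le> 0\<close>.\<close>

definition flat :: "real poly \<Rightarrow> real \<Rightarrow> real" where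
  "flat P x = (if x > 0 then poly P (inverse x) * exp (- inverse x) else 0)"

definition flat_deriv_poly :: "real poly \<Rightarrow> real poly" where
  "flat_deriv_poly P = [:0,0,1:] * (P - pderiv P)"

lemma poly_times_exp_neg_tendsto_0:
  fixes P :: "real poly" shows "((\<lambda>t. poly P t * exp (-t)) \<longlongrightarrow> 0) at_top"
proof -
  have "((\<lambda>t. \<Sum>i\<le>degree P. coeff P i * (t ^ i / exp t)) \<longlongrightarrow> (\<Sum>i\<le>degree P. coeff P i * 0)) at_top"
    by (intro tendsto_sum tendsto_mult tendsto_const tendsto_power_div_exp_0)
  moreover have "(\<Sum>i\<le>degree P. coeff P i * (t ^ i / exp t)) = poly P t * exp (-t)" for t
    by (simp add: poly_altdef sum_distrib_right sum_divide_distrib[symmetric] exp_minus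
        divide_inverse mult.assoc)
  ultimately show ?thesis by simp
qed

lemma has_real_derivative_flat: "(flat P has_real_derivative flat (flat_deriv_poly P) x) (at x)"
proof -
  consider "x > 0" | "x < 0" | "x = 0" by linarith
  then show ?thesis
  proof cases
    case 1
    have "((\<lambda>x. poly P (inverse x) * exp (- inverse x)) has_real_derivative
       poly (pderiv P) (inverse x) * (- inverse (x^2)) * exp (- inverse x) +
       poly P (inverse x) * (exp (- inverse x) * inverse (x^2))) (at x)"
      using 1 by (auto intro!: derivative_eq_intros DERIV_chain2[OF poly_DERIV]
          simp: power2_eq_square field_simps)
    moreover have "poly (pderiv P) (inverse x) * (- inverse (x^2)) * exp (- inverse x) +
       poly P (inverse x) * (exp (- inverse x) * inverse (x^2)) = flat (flat_deriv_poly P) x"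
      using 1 by (simp add: flat_def flat_deriv_poly_def field_simps power2_eq_square)
    ultimately have "((\<lambda>x. poly P (inverse x) * exp (- inverse x)) has_real_derivative
        flat (flat_deriv_poly P) x) (at x)"
      by simp
    then show ?thesis
      by (rule has_field_derivative_transform_within_open[where S="{0<..}"])
         (use 1 in \<open>auto simp: flat_def\<close>)
  next
    case 2
    have "((\<lambda>x. 0) has_real_derivative flat (flat_deriv_poly P) x) (at x)"
      using 2 by (simp add: flat_def)
    then show ?thesis
      by (rule has_field_derivative_transform_within_open[where S="{..<0}"])
         (use 2 in \<open>auto simp: flat_def\<close>)
  next
    case 3
    have l: "((\<lambda>y. (flat P y - flat P 0) / (y - 0)) \<longlongrightarrow> 0) (at_left 0)"
      by (rule tendsto_eventually) (auto simp: flat_def eventually_at_left_field intro: exI[of _ "-1"])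
    have "((\<lambda>y. poly ([:0,1:] * P) (inverse y) * exp (- inverse y)) \<longlongrightarrow> 0) (at_right 0)"
      using filterlim_compose[OF poly_times_exp_neg_tendsto_0[of "[:0,1:] * P"]
          filterlim_inverse_at_top_right]
      by simp
    then have r: "((\<lambda>y. (flat P y - flat P 0) / (y - 0)) \<longlongrightarrow> 0) (at_right 0)"
      by (rule Lim_transform_eventually)
         (auto simp: flat_def eventually_at_right_field field_simps intro!: exI[of _ 1])
    have "((\<lambda>y. (flat P y - flat P 0) / (y - 0)) \<longlongrightarrow> 0) (at 0)"
      using l r filterlim_at_split by blast
    then show ?thesis using 3 by (simp add: has_field_derivative_iff flat_def)
  qed
qed

lemma differentiable_upto_flat: "differentiable_upto n (flat P)"
proof (induction n arbitrary: P)
  case 0 then show ?case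
    using has_real_derivative_flat unfolding differentiable_upto.simps real_differentiable_def by blast
next
  case (Suc n)
  have "deriv (flat P) = flat (flat_deriv_poly P)"
    using has_real_derivative_flat DERIV_imp_deriv by blast
  then show ?case
    using Suc has_real_derivative_flat unfolding differentiable_upto.simps real_differentiable_def
    by metis
qed

lemma flat_1: "flat 1 x = (if x > 0 then exp (- inverse x) else 0)"
  by (simp add: flat_def)

definition smooth_step :: "real \<Rightarrow> real" where
  "smooth_step x = flat 1 x / (flat 1 x + flat 1 (1 - x))"

lemma smooth_step_denominator_pos: "flat 1 x + flat 1 (1 - x) > 0"
  by (auto simp: flat_1 add_pos_nonneg add_nonneg_pos)

lemma smooth_step_eq_0: "x \<le> 0 \<Longrightarrow> smooth_step x = 0"
  by (simp add: smooth_step_def flat_1)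

lemma smooth_step_eq_1: "x \<ge> 1 \<Longrightarrow> smooth_step x = 1"
  by (simp add: smooth_step_def flat_1)

lemma smooth_step_nonneg: "0 \<le> smooth_step x"
  using smooth_step_denominator_pos[of x] by (simp add: smooth_step_def flat_1)

lemma smooth_step_le_1: "smooth_step x \<le> 1"
  using smooth_step_denominator_pos[of x] by (simp add: smooth_step_def flat_1 divide_le_eq_1)

lemma differentiable_upto_smooth_step: "differentiable_upto n smooth_step"
proof -
  have "differentiable_upto n (\<lambda>x. flat 1 x * inverse (flat 1 x + flat 1 (1 - x)))"
    using smooth_step_denominator_pos
    by (intro differentiable_upto_mult differentiable_upto_flat differentiable_upto_inverse
        differentiable_upto_add differentiable_upto_compose[where f="flat 1", OF differentiable_upto_flat]
        differentiable_upto_diff differentiable_upto_const differentiable_upto_ident)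
       (metis less_irrefl)
  then show ?thesis unfolding smooth_step_def[abs_def] divide_inverse .
qed

lemma has_real_derivative_smooth_step: "(smooth_step has_real_derivative deriv smooth_step x) (at x)"
  using differentiable_upto_has_real_derivative[OF differentiable_upto_smooth_step[of 0]] .

lemma isCont_deriv_smooth_step: "isCont (deriv smooth_step) x"
  using differentiable_upto_smooth_step[of 1] by (auto intro: differentiable_imp_continuous_within)

lemma deriv_smooth_step_eq_0: "x < 0 \<or> x > 1 \<Longrightarrow> deriv smooth_step x = 0"
proof (elim disjE)
  assume "x < 0"
  have "(smooth_step has_real_derivative 0) (at x)"
    by (rule has_field_derivative_transform_within_open[where S="{..<0}" and f="\<lambda>x. 0"])
       (use \<open>x < 0\<close> smooth_step_eq_0 in auto)
  then show ?thesis by (rule DERIV_imp_deriv)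
next
  assume "x > 1"
  have "(smooth_step has_real_derivative 0) (at x)"
    by (rule has_field_derivative_transform_within_open[where S="{1<..}" and f="\<lambda>x. 1"])
       (use \<open>x > 1\<close> smooth_step_eq_1 in auto)
  then show ?thesis by (rule DERIV_imp_deriv)
qed

lemma bounded_deriv_smooth_step: obtains M where "\<And>x. \<bar>deriv smooth_step x\<bar> \<le> M"
proof -
  have "compact (deriv smooth_step ` {0..1})"
    by (intro compact_continuous_image continuous_at_imp_continuous_on ballI isCont_deriv_smooth_step)
       auto
  then obtain M where M: "\<And>y. y \<in> deriv smooth_step ` {0..1} \<Longrightarrow> norm y \<le> M"
    using compact_imp_bounded bounded_iff by metis
  have "\<bar>deriv smooth_step x\<bar> \<le> max M 0" for x
    using M[of "deriv smooth_step x"] deriv_smooth_step_eq_0[of x] by (cases "x < 0 \<or> x > 1") auto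
  then show ?thesis using that by blast
qed

subsection \<open>Smoothed indicators of intervals and the mollifier\<close>

definition smooth_box :: "real \<Rightarrow> real \<Rightarrow> real \<Rightarrow> real \<Rightarrow> real" where
  "smooth_box c a b x = smooth_step (c * (x - a)) - smooth_step (c * (x - b))"

lemma smooth_box_eq_0:
  assumes "c > 0" "x \<notin> {min a b .. max a b + 1 / c}" shows "smooth_box c a b x = 0"
proof -
  consider "x < min a b" | "x > max a b + 1 / c" using assms by (auto simp: not_le)
  then show ?thesis
  proof cases
    case 1
    then have "c * (x - a) \<le> 0" "c * (x - b) \<le> 0" using assms by (auto intro!: mult_nonneg_nonpos)
    then show ?thesis by (simp add: smooth_box_def smooth_step_eq_0)
  next
    case 2
    then have "x - a \<ge> 1 / c" "x - b \<ge> 1 / c" by auto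
    then have "c * (x - a) \<ge> 1" "c * (x - b) \<ge> 1" using assms by (simp_all add: field_simps)
    then show ?thesis by (simp add: smooth_box_def smooth_step_eq_1)
  qed
qed

lemma test_function_smooth_box: assumes "c > 0" shows "test_function (smooth_box c a b)"
proof -
  have "differentiable_upto n (smooth_box c a b)" for n
    unfolding smooth_box_def[abs_def]
    by (intro differentiable_upto_diff differentiable_upto_compose[OF differentiable_upto_smooth_step]
        differentiable_upto_mult differentiable_upto_const differentiable_upto_ident)
  moreover have "{x. smooth_box c a b x \<noteq> 0} \<subseteq> {min a b .. max a b + 1 / c}"
    using smooth_box_eq_0[OF assms] by blast
  then have "bounded {x. smooth_box c a b x \<noteq> 0}"
    by (rule bounded_subset[OF bounded_closed_interval])
  ultimately show ?thesis
    unfolding test_function_def differentiable_upto_iff by blast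
qed

lemma abs_smooth_box_le_1: "\<bar>smooth_box c a b x\<bar> \<le> 1"
  using smooth_step_nonneg[of "c * (x - a)"] smooth_step_le_1[of "c * (x - a)"]
    smooth_step_nonneg[of "c * (x - b)"] smooth_step_le_1[of "c * (x - b)"]
  unfolding smooth_box_def by linarith

lemma abs_mult_smooth_box_le: "\<bar>f x * smooth_box c a b x\<bar> \<le> \<bar>f x\<bar>"
  using abs_smooth_box_le_1[of c a b x] by (simp add: abs_mult mult_left_le)

lemma smooth_step_tendsto_indicator:
  "(\<lambda>n. smooth_step (real (Suc n) * (t - a))) \<longlonglongrightarrow> indicator {a<..} t"
proof (cases "t > a")
  case True
  obtain m where m: "real m > 1 / (t - a)" using reals_Archimedean2 by blast
  have "smooth_step (real (Suc n) * (t - a)) = 1" if "n \<ge> m" for n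
  proof (rule smooth_step_eq_1)
    have "real (Suc n) > 1 / (t - a)" using m that by linarith
    then show "real (Suc n) * (t - a) \<ge> 1" using True by (auto simp: field_simps)
  qed
  then show ?thesis
    using True by (intro tendsto_eventually) (auto simp: eventually_sequentially)
next
  case False
  then have "smooth_step (real (Suc n) * (t - a)) = 0" for n
    by (intro smooth_step_eq_0) (auto simp: mult_nonneg_nonpos)
  then show ?thesis using False by simp
qed

lemma smooth_box_tendsto_indicator:
  "(\<lambda>n. smooth_box (real (Suc n)) a b t) \<longlonglongrightarrow> indicator {a<..} t - indicator {b<..} t"
  unfolding smooth_box_def by (intro tendsto_diff smooth_step_tendsto_indicator)

lemma borel_measurable_smooth_box[measurable]: "smooth_box c a b \<in> borel_measurable borel"
proof -
  have cont: "isCont smooth_step x" for x using has_real_derivative_smooth_step DERIV_isCont by blast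
  have "isCont (smooth_box c a b) x" for x
    unfolding smooth_box_def[abs_def] by (intro continuous_intros isCont_o2[OF _ cont])
  then show ?thesis by (intro borel_measurable_continuous_onI continuous_at_imp_continuous_on ballI)
qed

definition mollifier :: "nat \<Rightarrow> real \<Rightarrow> real" where
  "mollifier n y = real (Suc n) * deriv smooth_step (real (Suc n) * y)"

lemma isCont_mollifier: "isCont (mollifier n) y"
  unfolding mollifier_def by (intro continuous_intros isCont_o2[OF _ isCont_deriv_smooth_step])

lemma borel_measurable_mollifier[measurable]: "mollifier n \<in> borel_measurable borel"
  using isCont_mollifier
  by (intro borel_measurable_continuous_onI continuous_at_imp_continuous_on ballI)

lemma mollifier_eq_0: "y \<notin> {0..1} \<Longrightarrow> mollifier n y = 0"
proof -
  assume y: "y \<notin> {0..1}"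
  have "real (Suc n) * y < 0 \<or> real (Suc n) * y > 1"
  proof (cases "y < 0")
    case True then show ?thesis by (simp add: mult_pos_neg)
  next
    case False
    then have "y > 1" using y by auto
    moreover have "real (Suc n) * y \<ge> 1 * y" using \<open>y > 1\<close> by (intro mult_right_mono) auto
    ultimately show ?thesis by linarith
  qed
  then show ?thesis unfolding mollifier_def using deriv_smooth_step_eq_0 by simp
qed

lemma bounded_mollifier: obtains C where "\<And>y. \<bar>mollifier n y\<bar> \<le> C"
proof -
  obtain M where M: "\<And>x. \<bar>deriv smooth_step x\<bar> \<le> M" using bounded_deriv_smooth_step by blast
  have "\<bar>mollifier n y\<bar> \<le> real (Suc n) * M" for y
    unfolding mollifier_def abs_mult using M[of "real (Suc n) * y"] by (simp add: mult_left_mono)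
  then show ?thesis using that by blast
qed

lemma deriv_smooth_box:
  "deriv (smooth_box (real (Suc n)) a b) = (\<lambda>x. mollifier n (x - a) - mollifier n (x - b))"
proof
  fix x
  have "(smooth_box (real (Suc n)) a b has_real_derivative
      deriv smooth_step (real (Suc n) * (x - a)) * real (Suc n) -
      deriv smooth_step (real (Suc n) * (x - b)) * real (Suc n)) (at x)"
    unfolding smooth_box_def[abs_def]
    by (intro derivative_intros DERIV_chain2[OF has_real_derivative_smooth_step])
       (auto intro!: derivative_eq_intros)
  then show "deriv (smooth_box (real (Suc n)) a b) x = mollifier n (x - a) - mollifier n (x - b)"
    by (auto dest: DERIV_imp_deriv simp: mollifier_def mult.commute)
qed

lemma integral_mollifier_interval:
  assumes "p \<le> q"
  shows "(\<integral>b. indicator {p..q} b * mollifier n (x - b) \<partial>lborel) = smooth_box (real (Suc n)) p q x"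
proof -
  have "(LBINT b=p..q. mollifier n (x - b)) =
      - smooth_step (real (Suc n) * (x - q)) - - smooth_step (real (Suc n) * (x - p))"
  proof (rule interval_integral_FTC_finite)
    show "continuous_on {min p q..max p q} (\<lambda>b. mollifier n (x - b))"
      by (intro continuous_at_imp_continuous_on ballI isCont_o2[OF _ isCont_mollifier]
          continuous_intros)
    fix b
    have "((\<lambda>b. - smooth_step (real (Suc n) * (x - b))) has_real_derivative
        - (deriv smooth_step (real (Suc n) * (x - b)) * (real (Suc n) * (0 - 1)))) (at b)"
      by (intro derivative_intros DERIV_chain2[OF has_real_derivative_smooth_step])
         (auto intro!: derivative_eq_intros)
    then show "((\<lambda>b. - smooth_step (real (Suc n) * (x - b))) has_vector_derivative
        mollifier n (x - b)) (at b within {min p q..max p q})"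
      by (simp add: mollifier_def algebra_simps has_real_derivative_iff_has_vector_derivative
          has_vector_derivative_at_within)
  qed
  then show ?thesis using assms
    by (simp add: interval_integral_Icc set_lebesgue_integral_def smooth_box_def)
qed

subsection \<open>Finiteness of \<open>\<nu>\<^sub>-\<^sub>1\<close> on strips away from the diagonal\<close>

lemma nn_integral_inverse_square_atLeast:
  assumes "\<delta> > 0"
  shows "(\<integral>\<^sup>+z. indicator {\<delta>..} z * ennreal (1 / z^2) \<partial>lborel) = ennreal (1 / \<delta>)"
proof -
  have "((\<lambda>z::real. - (1 / z)) \<longlongrightarrow> - 0) at_top"
    by (intro tendsto_minus tendsto_divide_0[OF tendsto_const]
        filterlim_at_top_imp_at_infinity[OF filterlim_ident])
  then have "(\<integral>\<^sup>+z\<in>{\<delta>..}. ennreal (1 / z^2) \<partial>lborel) = ennreal (0 - (- (1 / \<delta>)))"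
    by (intro nn_integral_FTC_atLeast)
       (use assms in \<open>auto intro!: derivative_eq_intros simp: power2_eq_square field_simps\<close>)
  then show ?thesis by (simp add: mult.commute)
qed

lemma nn_integral_inverse_square_far:
  assumes "\<delta> > 0"
  shows "(\<integral>\<^sup>+y. indicator {y. \<delta> \<le> \<bar>x - y\<bar>} y * ennreal (1 / \<bar>x - y\<bar>^2) \<partial>lborel) \<le> ennreal (2 / \<delta>)"
proof -
  let ?f = "\<lambda>z. indicator {\<delta>..} z * ennreal (1 / z^2)"
  have "(\<integral>\<^sup>+y. indicator {y. \<delta> \<le> \<bar>x - y\<bar>} y * ennreal (1 / \<bar>x - y\<bar>^2) \<partial>lborel) =
      (\<integral>\<^sup>+z. indicator {z. \<delta> \<le> \<bar>z\<bar>} z * ennreal (1 / z^2) \<partial>lborel)"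
    using nn_integral_real_affine[of "\<lambda>y. indicator {y. \<delta> \<le> \<bar>x - y\<bar>} y * ennreal (1 / \<bar>x - y\<bar>^2)" 1 x]
    by (auto simp: indicator_def)
  also have "\<dots> \<le> (\<integral>\<^sup>+z. ?f z + ?f (- z) \<partial>lborel)"
    by (intro nn_integral_mono) (auto simp: indicator_def abs_if)
  also have "\<dots> = (\<integral>\<^sup>+z. ?f z \<partial>lborel) + (\<integral>\<^sup>+z. ?f (- z) \<partial>lborel)"
    by (intro nn_integral_add) auto
  also have "(\<integral>\<^sup>+z. ?f (- z) \<partial>lborel) = (\<integral>\<^sup>+z. ?f z \<partial>lborel)"
    using nn_integral_real_affine[of ?f "-1" 0] by auto
  also have "(\<integral>\<^sup>+z. ?f z \<partial>lborel) + (\<integral>\<^sup>+z. ?f z \<partial>lborel) = ennreal (2 / \<delta>)"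
    using assms by (simp add: nn_integral_inverse_square_atLeast ennreal_plus[symmetric] del: ennreal_plus)
  finally show ?thesis .
qed

lemma nn_integral_inverse_square_far_from_interval_finite:
  assumes "\<delta> > 0"
  shows "(\<integral>\<^sup>+x. indicator {-R..R} x *
      (\<integral>\<^sup>+y. indicator {y. \<delta> \<le> \<bar>x - y\<bar>} y * ennreal (1 / \<bar>x - y\<bar>^2) \<partial>lborel) \<partial>lborel) < \<infinity>"
proof -
  have "(\<integral>\<^sup>+x. indicator {-R..R} x *
      (\<integral>\<^sup>+y. indicator {y. \<delta> \<le> \<bar>x - y\<bar>} y * ennreal (1 / \<bar>x - y\<bar>^2) \<partial>lborel) \<partial>lborel)
      \<le> (\<integral>\<^sup>+x. ennreal (2 / \<delta>) * indicator {-R..R} x \<partial>lborel)"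
    using nn_integral_inverse_square_far[OF assms] by (intro nn_integral_mono) (simp add: indicator_def)
  also have "\<dots> = ennreal (2 / \<delta>) * emeasure lborel {-R..R}"
    by (rule nn_integral_cmult_indicator) simp
  also have "\<dots> < \<infinity>"
    using emeasure_bounded_finite[OF bounded_closed_interval[of "-R" R]] by (simp add: ennreal_mult_less_top)
  finally show ?thesis .
qed

lemma nu_m1_mono_AE:
  assumes "AE p in lborel \<Otimes>\<^sub>M lborel. p \<in> A \<longrightarrow> p \<in> B"
  shows "nu_m1 A \<le> nu_m1 B"
  unfolding nu_m1_def using assms
  by (intro nn_integral_mono_AE) (auto elim!: eventually_mono simp: indicator_def)

lemma nu_m1_strips_finite:
  assumes "\<delta> > 0"
  shows "nu_m1 {p. (\<bar>fst p\<bar> \<le> R \<or> \<bar>snd p\<bar> \<le> R) \<and> \<delta> \<le> \<bar>fst p - snd p\<bar>} < \<infinity>"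
proof -
  define w where "w p = indicator {p. \<delta> \<le> \<bar>fst p - snd p\<bar>} p * ennreal (1 / \<bar>fst p - snd p\<bar>^2)"
    for p :: "real \<times> real"
  have "nu_m1 {p. (\<bar>fst p\<bar> \<le> R \<or> \<bar>snd p\<bar> \<le> R) \<and> \<delta> \<le> \<bar>fst p - snd p\<bar>} \<le>
      (\<integral>\<^sup>+p. indicator {-R..R} (fst p) * w p + indicator {-R..R} (snd p) * w p \<partial>(lborel \<Otimes>\<^sub>M lborel))"
    unfolding nu_m1_def using assms
    by (intro nn_integral_mono) (auto simp: w_def indicator_def abs_le_iff)
  also have "\<dots> = (\<integral>\<^sup>+p. indicator {-R..R} (fst p) * w p \<partial>(lborel \<Otimes>\<^sub>M lborel)) +
      (\<integral>\<^sup>+p. indicator {-R..R} (snd p) * w p \<partial>(lborel \<Otimes>\<^sub>M lborel))"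
    by (intro nn_integral_add) (auto simp: w_def)
  also have "(\<integral>\<^sup>+p. indicator {-R..R} (fst p) * w p \<partial>(lborel \<Otimes>\<^sub>M lborel)) =
      (\<integral>\<^sup>+x. \<integral>\<^sup>+y. indicator {-R..R} x * w (x, y) \<partial>lborel \<partial>lborel)"
    by (subst lborel.nn_integral_fst[symmetric]) (auto simp: w_def)
  also have "\<dots> = (\<integral>\<^sup>+x. indicator {-R..R} x *
      (\<integral>\<^sup>+y. indicator {y. \<delta> \<le> \<bar>x - y\<bar>} y * ennreal (1 / \<bar>x - y\<bar>^2) \<partial>lborel) \<partial>lborel)"
    by (intro nn_integral_cong, subst nn_integral_cmult[symmetric]) (auto simp: w_def indicator_def)
  also have "(\<integral>\<^sup>+p. indicator {-R..R} (snd p) * w p \<partial>(lborel \<Otimes>\<^sub>M lborel)) =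
      (\<integral>\<^sup>+y. \<integral>\<^sup>+x. indicator {-R..R} y * w (x, y) \<partial>lborel \<partial>lborel)"
    by (subst lborel_pair.nn_integral_snd[symmetric]) (auto simp: w_def)
  also have "\<dots> = (\<integral>\<^sup>+y. indicator {-R..R} y *
      (\<integral>\<^sup>+x. indicator {x. \<delta> \<le> \<bar>y - x\<bar>} x * ennreal (1 / \<bar>y - x\<bar>^2) \<partial>lborel) \<partial>lborel)"
    by (intro nn_integral_cong, subst nn_integral_cmult[symmetric])
       (auto simp: w_def indicator_def abs_minus_commute)
  finally show ?thesis
    by (rule order.strict_trans1)
       (use nn_integral_inverse_square_far_from_interval_finite[OF assms, of R] in
        \<open>simp add: ennreal_add_less_top\<close>)
qed

text \<open>Only the values of \<open>G\<close> on a neighbourhood of \<open>[-R, R]\<close> matter: a pair in \<open>E\<^sub>\<lambda>[u]\<close> has a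
  coordinate in \<open>[-R, R]\<close>, and if it is close to the diagonal the other one is close too.\<close>

lemma nu_m1_E_lam_finite:
  fixes u G :: "real \<Rightarrow> real"
  assumes "AE x in lborel. u x = G x" and "AE x in lborel. \<bar>x\<bar> > R \<longrightarrow> u x = 0"
    and "uniformly_continuous_on {-R-1..R+1} G" and "lam > 0"
  shows "nu_m1 (E_lam lam u) < \<infinity>"
proof -
  have "\<exists>d>0. \<forall>x\<in>{-R-1..R+1}. \<forall>y\<in>{-R-1..R+1}. \<bar>x - y\<bar> < d \<longrightarrow> \<bar>G x - G y\<bar> < lam"
    using assms(3,4) unfolding uniformly_continuous_on_def dist_real_def by blast
  then obtain \<delta>0 where "\<delta>0 > 0" and \<delta>0:
      "\<And>x y. x \<in> {-R-1..R+1} \<Longrightarrow> y \<in> {-R-1..R+1} \<Longrightarrow> \<bar>x - y\<bar> < \<delta>0 \<Longrightarrow> \<bar>G x - G y\<bar> < lam"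
    by blast
  define \<delta> where "\<delta> = min \<delta>0 1"
  have "AE x in lborel. u x = G x \<and> (\<bar>x\<bar> > R \<longrightarrow> u x = 0)"
    using assms(1,2) by (rule eventually_conj)
  then obtain N where N: "\<And>x. x \<in> space lborel - N \<Longrightarrow> u x = G x \<and> (\<bar>x\<bar> > R \<longrightarrow> u x = 0)"
    and "N \<in> null_sets lborel"
    by (erule AE_E3)
  have good: "u x = G x \<and> (\<bar>x\<bar> > R \<longrightarrow> u x = 0)" if "x \<notin> N" for x
    using N[of x] that unfolding space_lborel space_borel by blast
  have "N \<times> UNIV \<in> null_sets (lborel \<Otimes>\<^sub>M lborel)" "UNIV \<times> N \<in> null_sets (lborel \<Otimes>\<^sub>M lborel)"
    using \<open>N \<in> null_sets lborel\<close> by (auto intro: lborel.times_in_null_sets1 lborel.times_in_null_sets2)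
  then have "AE p in lborel \<Otimes>\<^sub>M lborel. p \<notin> N \<times> UNIV \<union> UNIV \<times> N"
    by (intro AE_not_in null_sets.Un)
  then have "AE p in lborel \<Otimes>\<^sub>M lborel. p \<in> E_lam lam u \<longrightarrow>
      p \<in> {p. (\<bar>fst p\<bar> \<le> R \<or> \<bar>snd p\<bar> \<le> R) \<and> \<delta> \<le> \<bar>fst p - snd p\<bar>}"
  proof eventually_elim
    case (elim p)
    show ?case
    proof
      assume "p \<in> E_lam lam u"
      with elim obtain x y where p: "p = (x, y)" and "x \<notin> N" "y \<notin> N" "\<bar>u x - u y\<bar> > lam"
        by (auto simp: E_lam_def)
      then have E: "\<bar>G x - G y\<bar> > lam" and near: "\<bar>x\<bar> \<le> R \<or> \<bar>y\<bar> \<le> R"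
        using good[of x] good[of y] assms(4) by auto
      have "\<delta> \<le> \<bar>x - y\<bar>"
      proof (rule ccontr)
        assume "\<not> \<delta> \<le> \<bar>x - y\<bar>"
        then have "x \<in> {-R-1..R+1}" "y \<in> {-R-1..R+1}" "\<bar>x - y\<bar> < \<delta>0"
          using near by (auto simp: \<delta>_def)
        then have "\<bar>G x - G y\<bar> < lam" by (rule \<delta>0)
        with E show False by linarith
      qed
      with near p show "p \<in> {p. (\<bar>fst p\<bar> \<le> R \<or> \<bar>snd p\<bar> \<le> R) \<and> \<delta> \<le> \<bar>fst p - snd p\<bar>}"
        by simp
    qed
  qed
  then have "nu_m1 (E_lam lam u) \<le>
      nu_m1 {p. (\<bar>fst p\<bar> \<le> R \<or> \<bar>snd p\<bar> \<le> R) \<and> \<delta> \<le> \<bar>fst p - snd p\<bar>}"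
    by (rule nu_m1_mono_AE)
  also have "\<dots> < \<infinity>" using \<open>\<delta>0 > 0\<close> by (intro nu_m1_strips_finite) (simp add: \<delta>_def)
  finally show ?thesis .
qed

lemma (in pair_sigma_finite) integrable_product:
  fixes f g :: "_ \<Rightarrow> real"
  assumes f: "integrable M1 f" and g: "integrable M2 g"
  shows "integrable (M1 \<Otimes>\<^sub>M M2) (\<lambda>(x, y). f x * g y)"
proof (rule Fubini_integrable)
  show "(\<lambda>(x, y). f x * g y) \<in> borel_measurable (M1 \<Otimes>\<^sub>M M2)"
    using f g by (auto simp: case_prod_beta intro!: borel_measurable_times
        measurable_compose[OF measurable_fst] measurable_compose[OF measurable_snd])
  show "integrable M1 (\<lambda>x. \<integral>y. norm ((\<lambda>(x, y). f x * g y) (x, y)) \<partial>M2)"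
    using f by (simp add: abs_mult)
  show "AE x in M1. integrable M2 (\<lambda>y. (\<lambda>(x, y). f x * g y) (x, y))"
    using g by simp
qed

lemma integrable_indicator_bounded:
  "bounded A \<Longrightarrow> A \<in> sets borel \<Longrightarrow> integrable lborel (indicator A :: real \<Rightarrow> real)"
  using emeasure_bounded_finite[of A] by (intro integrable_real_indicator) auto

lemma integrable_indicator_locally_integrable:
  "locally_integrable u \<Longrightarrow> integrable lborel (\<lambda>x. indicator {c..d} x * u x)"
  by (simp add: locally_integrable_def set_integrable_def)

lemma borel_measurable_locally_integrable:
  assumes "locally_integrable u" shows "u \<in> borel_measurable borel"
proof (rule borel_measurable_LIMSEQ_real)
  show "(\<lambda>n. indicator {- real n..real n} x * u x) \<longlonglongrightarrow> u x" for x
  proof (rule tendsto_eventually)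
    obtain m where "real m \<ge> \<bar>x\<bar>" using real_arch_simple by blast
    then show "\<forall>\<^sub>F n in sequentially. indicator {- real n..real n} x * u x = u x"
      unfolding eventually_sequentially by (intro exI[of _ m]) (auto simp: indicator_def abs_le_iff)
  qed
  show "(\<lambda>x. indicator {- real n..real n} x * u x) \<in> borel_measurable borel" for n
    using integrable_indicator_locally_integrable[OF assms] by (simp add: borel_measurable_integrable)
qed

lemma integrable_locally_integrable_mult:
  assumes u: "locally_integrable u" and [measurable]: "h \<in> borel_measurable borel"
    and bound: "\<And>x. \<bar>h x\<bar> \<le> M" and support: "\<And>x. x \<notin> {c..d} \<Longrightarrow> h x = 0"
  shows "integrable lborel (\<lambda>x. u x * h x)"
proof (rule Bochner_Integration.integrable_bound)
  show "integrable lborel (\<lambda>x. M * (indicator {c..d} x * u x))"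
    using integrable_indicator_locally_integrable[OF u] by auto
  show "(\<lambda>x. u x * h x) \<in> borel_measurable lborel"
    using borel_measurable_locally_integrable[OF u] by measurable
  have "M \<ge> 0" using bound[of 0] by linarith
  then show "AE x in lborel. norm (u x * h x) \<le> norm (M * (indicator {c..d} x * u x))"
    using bound support by (intro AE_I2) (auto simp: abs_mult indicator_def mult_right_mono mult.commute)
qed

lemma nn_integral_pos_eq_neg_if_integral_eq_0:
  fixes f :: "'a \<Rightarrow> real"
  assumes "integrable M f" and "integral\<^sup>L M f = 0"
  shows "(\<integral>\<^sup>+x. ennreal (f x) \<partial>M) = (\<integral>\<^sup>+x. ennreal (- f x) \<partial>M)"
  using assms(1) by (rule integrableE) (use assms(2) in auto)

text \<open>The measures with densities \<open>h\<^sup>+\<close> and \<open>h\<^sup>-\<close> agree on all half-lines, hence everywhere.\<close>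

lemma AE_eq_0_if_integral_greaterThan_eq_0:
  fixes h :: "real \<Rightarrow> real"
  assumes h: "integrable lborel h" and zero: "\<And>c. (\<integral>x. h x * indicator {c<..} x \<partial>lborel) = 0"
  shows "AE x in lborel. h x = 0"
proof -
  have [measurable]: "h \<in> borel_measurable borel" using h by (simp add: borel_measurable_integrable)
  have hc: "integrable lborel (\<lambda>x. h x * indicator {c<..} x)" for c
    using integrable_mult_indicator[OF _ h, of "{c<..}"] by (simp add: mult.commute)
  have "density lborel (\<lambda>x. ennreal (h x)) = density lborel (\<lambda>x. ennreal (- h x))"
  proof (rule measure_eqI_lessThan)
    show "emeasure (density lborel (\<lambda>x. ennreal (h x))) {c<..} < \<infinity>" for c
      using integrableD(2)[OF hc[of c]]
      by (simp add: emeasure_density nn_integral_set_ennreal top.not_eq_extremum)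
    show "emeasure (density lborel (\<lambda>x. ennreal (h x))) {c<..} =
        emeasure (density lborel (\<lambda>x. ennreal (- h x))) {c<..}" for c
      using nn_integral_pos_eq_neg_if_integral_eq_0[OF hc zero, of c]
      by (simp add: emeasure_density nn_integral_set_ennreal)
  qed auto
  then have "AE x in lborel. ennreal (h x) = ennreal (- h x)"
    by (intro sigma_finite_measure.density_unique[OF sigma_finite_lborel]) auto
  then show ?thesis
    by (rule eventually_mono) (case_tac "h x \<ge> 0", auto simp: ennreal_neg ennreal_eq_0_iff)
qed

lemma AE_eq_0_if_integral_Ioc_eq_0:
  fixes f :: "real \<Rightarrow> real"
  assumes "f \<in> borel_measurable borel"
    and integrable: "\<And>p q. p \<le> q \<Longrightarrow> integrable lborel (\<lambda>x. f x * indicator {p<..q} x)"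
    and zero: "\<And>p q. p \<le> q \<Longrightarrow> (\<integral>x. f x * indicator {p<..q} x \<partial>lborel) = 0"
  shows "AE x in lborel. f x = 0"
proof -
  have "AE x in lborel. f x * indicator {- real m<..real m} x = 0" for m :: nat
  proof (rule AE_eq_0_if_integral_greaterThan_eq_0)
    show "integrable lborel (\<lambda>x. f x * indicator {- real m<..real m} x)" by (rule integrable) simp
    fix c
    show "(\<integral>x. f x * indicator {- real m<..real m} x * indicator {c<..} x \<partial>lborel) = 0"
    proof (cases "c \<le> real m")
      case True
      have "(\<lambda>x. f x * indicator {- real m<..real m} x * indicator {c<..} x) =
          (\<lambda>x. f x * indicator {max c (- real m)<..real m} x)"
        by (auto simp: indicator_def fun_eq_iff)
      then show ?thesis using zero[of "max c (- real m)" "real m"] True by simp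
    next
      case False
      then have "(\<lambda>x. f x * indicator {- real m<..real m} x * indicator {c<..} x) = (\<lambda>x. 0)"
        by (auto simp: indicator_def fun_eq_iff)
      then show ?thesis by simp
    qed
  qed
  then have "AE x in lborel. \<forall>m::nat. f x * indicator {- real m<..real m} x = 0"
    by (subst AE_all_countable) auto
  then show ?thesis
  proof (rule eventually_mono)
    fix x assume x: "\<forall>m::nat. f x * indicator {- real m<..real m} x = 0"
    obtain m :: nat where "real m > \<bar>x\<bar>" using reals_Archimedean2 by blast
    then have "x \<in> {- real m<..real m}" by auto
    then show "f x = 0" using x[rule_format, of m] by simp
  qed
qed

lemma indicator_greaterThan_tendsto:
  fixes t b :: real
  assumes "x \<longlonglongrightarrow> b" and "t \<noteq> b"
  shows "(\<lambda>n. indicator {x n<..} t) \<longlonglongrightarrow> indicator {b<..} t"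
proof (cases "t > b")
  case True
  then have "eventually (\<lambda>n. x n < t) sequentially" by (rule order_tendstoD(2)[OF assms(1)])
  then show ?thesis using True by (intro tendsto_eventually) (auto elim: eventually_mono)
next
  case False
  then have "eventually (\<lambda>n. t < x n) sequentially"
    using assms by (intro order_tendstoD(1)[OF assms(1)]) auto
  then show ?thesis using False by (intro tendsto_eventually) (auto elim: eventually_mono)
qed


locale weak_derivative_bounded_support =
  fixes u g :: "real \<Rightarrow> real" and R :: real
  assumes locally_integrable: "locally_integrable u" and integrable_g: "integrable lborel g"
    and weak_derivative:
      "\<And>\<phi>. test_function \<phi> \<Longrightarrow> (\<integral>x. u x * deriv \<phi> x \<partial>lborel) = - (\<integral>x. g x * \<phi> x \<partial>lborel)"
    and support: "AE x in lborel. \<bar>x\<bar> > R \<longrightarrow> u x = 0"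
begin

lemma borel_measurable_u[measurable]: "u \<in> borel_measurable borel"
  using borel_measurable_locally_integrable[OF locally_integrable] .

lemma borel_measurable_g[measurable]: "g \<in> borel_measurable borel"
  using integrable_g by (simp add: borel_measurable_integrable)

text \<open>\<open>mollified n\<close> is \<open>u\<close> smoothed at scale \<open>1 / (n + 1)\<close>. Testing the weak derivative against
  \<open>smooth_box\<close> shows that it converges pointwise to \<open>primitive\<close>, and Fubini shows that its
  integrals over intervals converge to those of \<open>u\<close>.\<close>

definition mollified :: "nat \<Rightarrow> real \<Rightarrow> real" where
  "mollified n b = (\<integral>x. u x * mollifier n (x - b) \<partial>lborel)"

definition primitive :: "real \<Rightarrow> real" where
  "primitive b = (\<integral>t. g t * (indicator {- R - 2<..} t - indicator {b<..} t) \<partial>lborel)"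

lemma integrable_u_mult_mollifier: "integrable lborel (\<lambda>x. u x * mollifier n (x - b))"
proof -
  obtain C where "\<And>y. \<bar>mollifier n y\<bar> \<le> C" using bounded_mollifier by blast
  then show ?thesis
    by (intro integrable_locally_integrable_mult[OF locally_integrable, where c=b and d="b + 1"])
       (auto intro!: mollifier_eq_0)
qed

lemma mollified_eq: "mollified n b = (\<integral>t. g t * smooth_box (real (Suc n)) (- R - 2) b t \<partial>lborel)"
proof -
  have "AE x in lborel. u x * mollifier n (x - (- R - 2)) = 0"
    using support by eventually_elim (auto intro!: mollifier_eq_0)
  then have "(\<integral>x. u x * mollifier n (x - (- R - 2)) \<partial>lborel) = 0"
    by (rule integral_eq_zero_AE)
  moreover have "(\<integral>x. u x * (mollifier n (x - (- R - 2)) - mollifier n (x - b)) \<partial>lborel) =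
      - (\<integral>t. g t * smooth_box (real (Suc n)) (- R - 2) b t \<partial>lborel)"
    using weak_derivative[OF test_function_smooth_box[of "real (Suc n)" "- R - 2" b]]
    by (simp only: deriv_smooth_box)
  ultimately show ?thesis
    using integrable_u_mult_mollifier[of n "- R - 2"] integrable_u_mult_mollifier[of n b]
    by (simp add: mollified_def right_diff_distrib)
qed

lemma mollified_tendsto_primitive: "(\<lambda>n. mollified n b) \<longlonglongrightarrow> primitive b"
  unfolding mollified_eq primitive_def
proof (rule integral_dominated_convergence[where w="\<lambda>t. \<bar>g t\<bar>"])
  show "AE t in lborel. (\<lambda>n. g t * smooth_box (real (Suc n)) (- R - 2) b t) \<longlonglongrightarrow>
      g t * (indicator {- R - 2<..} t - indicator {b<..} t)"
    by (intro AE_I2 tendsto_mult tendsto_const smooth_box_tendsto_indicator)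
  show "AE t in lborel. norm (g t * smooth_box (real (Suc n)) (- R - 2) b t) \<le> \<bar>g t\<bar>" for n
    using abs_mult_smooth_box_le by simp
qed (use integrable_g in auto)

lemma abs_mollified_le: "\<bar>mollified n b\<bar> \<le> (\<integral>t. \<bar>g t\<bar> \<partial>lborel)"
proof -
  have "\<bar>mollified n b\<bar> \<le> (\<integral>t. \<bar>g t * smooth_box (real (Suc n)) (- R - 2) b t\<bar> \<partial>lborel)"
    unfolding mollified_eq by (rule integral_abs_bound)
  also have "\<dots> \<le> (\<integral>t. \<bar>g t\<bar> \<partial>lborel)"
    using integrable_g abs_mult_smooth_box_le
    by (intro integral_mono Bochner_Integration.integrable_bound[OF integrable_abs[OF integrable_g]]) auto
  finally show ?thesis .
qed

lemma abs_primitive_le: "\<bar>primitive b\<bar> \<le> (\<integral>t. \<bar>g t\<bar> \<partial>lborel)"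
  using abs_mollified_le by (intro LIMSEQ_le_const2[OF tendsto_rabs[OF mollified_tendsto_primitive]]) auto

lemma borel_measurable_mollified[measurable]: "mollified n \<in> borel_measurable borel"
proof -
  have "(\<lambda>b. \<integral>x. u x * mollifier n (x - b) \<partial>lborel) \<in> borel_measurable lborel"
    by (rule lborel.borel_measurable_lebesgue_integral) measurable
  then show ?thesis unfolding mollified_def[abs_def] by simp
qed

lemma isCont_primitive: "isCont primitive b"
proof (rule continuous_at_sequentiallyI)
  fix x assume x: "x \<longlonglongrightarrow> b"
  show "(\<lambda>n. primitive (x n)) \<longlonglongrightarrow> primitive b"
    unfolding primitive_def
  proof (rule integral_dominated_convergence[where w="\<lambda>t. \<bar>g t\<bar>"])
    show "AE t in lborel. (\<lambda>n. g t * (indicator {- R - 2<..} t - indicator {x n<..} t)) \<longlonglongrightarrow>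
        g t * (indicator {- R - 2<..} t - indicator {b<..} t)"
      using AE_lborel_singleton[of b]
      by eventually_elim (intro tendsto_intros indicator_greaterThan_tendsto[OF x])
    show "AE t in lborel. norm (g t * (indicator {- R - 2<..} t - indicator {x n<..} t)) \<le> \<bar>g t\<bar>" for n
      by (intro AE_I2) (auto simp: indicator_def)
  qed (use integrable_g in auto)
qed

lemma borel_measurable_primitive[measurable]: "primitive \<in> borel_measurable borel"
  using isCont_primitive by (intro borel_measurable_continuous_onI continuous_at_imp_continuous_on ballI)

lemma integrable_mollifier_product:
  "integrable (lborel \<Otimes>\<^sub>M lborel) (\<lambda>(x, b). u x * (mollifier n (x - b) * indicator {p..q} b))"
proof -
  obtain C where C: "\<And>y. \<bar>mollifier n y\<bar> \<le> C" using bounded_mollifier by blast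
  then have "C \<ge> 0" by (meson abs_ge_zero order_trans)
  have "integrable (lborel \<Otimes>\<^sub>M lborel)
      (\<lambda>(x, b). (C * \<bar>indicator {p..q + 1} x * u x\<bar>) * indicator {p..q} b)"
    using integrable_indicator_locally_integrable[OF locally_integrable]
    by (intro lborel_pair.integrable_product integrable_indicator_bounded) auto
  then show ?thesis
  proof (rule Bochner_Integration.integrable_bound)
    show "(\<lambda>(x, b). u x * (mollifier n (x - b) * indicator {p..q} b)) \<in> borel_measurable (lborel \<Otimes>\<^sub>M lborel)"
      by measurable
    have "\<bar>u x * (mollifier n (x - b) * indicator {p..q} b)\<bar> \<le>
        \<bar>C * \<bar>indicator {p..q + 1} x * u x\<bar> * indicator {p..q} b\<bar>" for x b
    proof (cases "b \<in> {p..q} \<and> x - b \<in> {0..1}")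
      case True
      have "\<bar>u x\<bar> * \<bar>mollifier n (x - b)\<bar> \<le> \<bar>u x\<bar> * C" by (rule mult_left_mono[OF C]) simp
      then show ?thesis using True \<open>C \<ge> 0\<close> by (simp add: abs_mult mult_ac)
    qed (auto simp: mollifier_eq_0)
    then show "AE z in lborel \<Otimes>\<^sub>M lborel.
        norm ((\<lambda>(x, b). u x * (mollifier n (x - b) * indicator {p..q} b)) z) \<le>
        norm ((\<lambda>(x, b). (C * \<bar>indicator {p..q + 1} x * u x\<bar>) * indicator {p..q} b) z)"
      by (intro AE_I2) (auto split: prod.split)
  qed
qed

lemma integral_mollified_Icc:
  assumes "p \<le> q"
  shows "(\<integral>b. indicator {p..q} b * mollified n b \<partial>lborel) =
    (\<integral>x. u x * smooth_box (real (Suc n)) p q x \<partial>lborel)"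
proof -
  have "(\<integral>b. \<integral>x. u x * (mollifier n (x - b) * indicator {p..q} b) \<partial>lborel \<partial>lborel) =
      (\<integral>x. \<integral>b. u x * (mollifier n (x - b) * indicator {p..q} b) \<partial>lborel \<partial>lborel)"
    using lborel_pair.Fubini_integral[OF integrable_mollifier_product] by simp
  moreover have "(\<integral>x. u x * (mollifier n (x - b) * indicator {p..q} b) \<partial>lborel) =
      indicator {p..q} b * mollified n b" for b
    unfolding mollified_def
    by (subst integral_mult_right_zero[symmetric]) (simp add: ac_simps)
  moreover have "(\<integral>b. mollifier n (x - b) * indicator {p..q} b \<partial>lborel) =
      smooth_box (real (Suc n)) p q x" for x
    using integral_mollifier_interval[OF assms, of n x] by (simp add: mult.commute)
  ultimately show ?thesis by simp
qed

lemma integral_mollified_Icc_tendsto: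
  "(\<lambda>n. \<integral>b. indicator {p..q} b * mollified n b \<partial>lborel) \<longlonglongrightarrow>
    (\<integral>b. indicator {p..q} b * primitive b \<partial>lborel)"
proof (rule integral_dominated_convergence[where w="\<lambda>b. indicator {p..q} b * (\<integral>t. \<bar>g t\<bar> \<partial>lborel)"])
  show "AE b in lborel. (\<lambda>n. indicator {p..q} b * mollified n b) \<longlonglongrightarrow> indicator {p..q} b * primitive b"
    by (intro AE_I2 tendsto_mult tendsto_const mollified_tendsto_primitive)
  show "AE b in lborel. norm (indicator {p..q} b * mollified n b) \<le>
      indicator {p..q} b * (\<integral>t. \<bar>g t\<bar> \<partial>lborel)" for n
    using abs_mollified_le by (intro AE_I2) (auto simp: indicator_def)
qed (auto intro: integrable_indicator_bounded)

lemma integral_u_smooth_box_tendsto: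
  assumes "p \<le> q"
  shows "(\<lambda>n. \<integral>x. u x * smooth_box (real (Suc n)) p q x \<partial>lborel) \<longlonglongrightarrow>
    (\<integral>x. u x * indicator {p<..q} x \<partial>lborel)"
proof (rule integral_dominated_convergence[where w="\<lambda>x. \<bar>indicator {p..q + 1} x * u x\<bar>"])
  show "integrable lborel (\<lambda>x. \<bar>indicator {p..q + 1} x * u x\<bar>)"
    using integrable_indicator_locally_integrable[OF locally_integrable] by auto
  have "indicator {p<..} x - indicator {q<..} x = (indicator {p<..q} x :: real)" for x
    using assms by (auto simp: indicator_def)
  then show "AE x in lborel. (\<lambda>n. u x * smooth_box (real (Suc n)) p q x) \<longlonglongrightarrow> u x * indicator {p<..q} x"
    using smooth_box_tendsto_indicator by (intro AE_I2 tendsto_mult tendsto_const) metis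
  have "smooth_box (real (Suc n)) p q x = 0" if "x \<notin> {p..q + 1}" for n x
  proof (rule smooth_box_eq_0)
    show "x \<notin> {min p q..max p q + 1 / real (Suc n)}"
    proof
      assume "x \<in> {min p q..max p q + 1 / real (Suc n)}"
      then have "x \<le> q + 1 / real (Suc n)" using assms by auto
      also have "\<dots> \<le> q + 1" by simp
      finally show False using that assms \<open>x \<in> _\<close> by auto
    qed
  qed simp
  then show "AE x in lborel. norm (u x * smooth_box (real (Suc n)) p q x) \<le>
      \<bar>indicator {p..q + 1} x * u x\<bar>" for n
    using abs_smooth_box_le_1 by (intro AE_I2) (auto simp: abs_mult indicator_def mult_left_le)
qed auto

lemma integral_u_Ioc_eq_integral_primitive:
  assumes "p \<le> q"
  shows "(\<integral>x. u x * indicator {p<..q} x \<partial>lborel) = (\<integral>b. indicator {p..q} b * primitive b \<partial>lborel)"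
  using LIMSEQ_unique[OF integral_u_smooth_box_tendsto[OF assms]
      integral_mollified_Icc_tendsto[of p q, unfolded integral_mollified_Icc[OF assms]]] .

lemma AE_u_eq_primitive: "AE x in lborel. u x = primitive x"
proof -
  have "AE x in lborel. u x - primitive x = 0"
  proof (rule AE_eq_0_if_integral_Ioc_eq_0)
    fix p q :: real assume "p \<le> q"
    have u: "integrable lborel (\<lambda>x. u x * indicator {p<..q} x)"
      by (rule integrable_locally_integrable_mult[OF locally_integrable, where M=1 and c=p and d=q])
         (auto simp: indicator_def)
    have "integrable lborel (\<lambda>x. (\<integral>t. \<bar>g t\<bar> \<partial>lborel) * indicator {p<..q} x)"
      by (intro integrable_mult_right integrable_indicator_bounded) auto
    then have G: "integrable lborel (\<lambda>x. primitive x * indicator {p<..q} x)"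
      by (rule Bochner_Integration.integrable_bound)
         (use abs_primitive_le in \<open>auto simp: indicator_def intro!: AE_I2\<close>)
    then show "integrable lborel (\<lambda>x. (u x - primitive x) * indicator {p<..q} x)"
      using u by (simp add: left_diff_distrib)
    have "(\<integral>x. primitive x * indicator {p<..q} x \<partial>lborel) = (\<integral>b. indicator {p..q} b * primitive b \<partial>lborel)"
      using AE_lborel_singleton[of p]
      by (intro integral_cong_AE) (auto simp: indicator_def elim!: eventually_mono)
    then show "(\<integral>x. (u x - primitive x) * indicator {p<..q} x \<partial>lborel) = 0"
      using integral_u_Ioc_eq_integral_primitive[OF \<open>p \<le> q\<close>] u G by (simp add: left_diff_distrib)
  qed measurable
  then show ?thesis by (rule eventually_mono) simp
qed

end

theorem lemma6p5:
  fixes u :: "real \<Rightarrow> real"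
  assumes "u \<in> dot_W11"
    and "\<exists>R. AE x in lborel. \<bar>x\<bar> > R \<longrightarrow> u x = 0"
  shows "\<forall>lam>0. nu_m1 (E_lam lam u) < \<infinity>"
proof (intro allI impI)
  fix lam :: real assume "lam > 0"
  obtain R where support: "AE x in lborel. \<bar>x\<bar> > R \<longrightarrow> u x = 0" using assms(2) by blast
  obtain g where "locally_integrable u" "integrable lborel g"
    "\<And>\<phi>. test_function \<phi> \<Longrightarrow> (\<integral>x. u x * deriv \<phi> x \<partial>lborel) = - (\<integral>x. g x * \<phi> x \<partial>lborel)"
    using assms(1) unfolding dot_W11_def by blast
  then interpret weak_derivative_bounded_support u g R
    using support by unfold_locales
  have "uniformly_continuous_on {-R-1..R+1} primitive"
    by (intro compact_uniformly_continuous continuous_at_imp_continuous_on ballI isCont_primitive) auto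
  then show "nu_m1 (E_lam lam u) < \<infinity>"
    by (rule nu_m1_E_lam_finite[OF AE_u_eq_primitive support _ \<open>lam > 0\<close>])
qed

end
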